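(* Consider the following slotted system. There are $N\ge2$ users and slots $t=1,\dots,T$. In each slot the BS schedules one user by a deterministic algorithm, whose choice in slot $t$ may depend on the adversary's actions before slot $t$. An adversary uses a blocking matrix $\sigma\in\{0,1\}^{N\times T}$, where $\sigma_i(t)=0$ means user $i$ is blocked in slot $t$. Feasibility means $\sum_{i,t}(1-\sigma_i(t))\le\alpha T$ and at most one user is blocked per slot, where $0<\alpha<1$ and $\alpha T\in\mathbb Z$. Ages satisfy $a_i(1)=1$, $a_i(t+1)=1$ if user $i$ is scheduled and not blocked in slot $t$, and $a_i(t+1)=a_i(t)+1$ otherwise. The average age is $\Delta=\frac1T\sum_{t=1}^T\frac1N\sum_i a_i(t)$. Then for every deterministic scheduling algorithm there exists a feasible blocking matrix under which $\Delta\ge\frac{T\alpha^2}{2}$. *)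

theory Defs
  imports Complex_Main
begin

text \<open>Users are indexed 0,...,N-1, slots 1,...,T.
  A blocking matrix is represented by  blk :: nat => nat => bool  with
  blk i t = True  iff  sigma_i(t) = 0, i.e. user i is blocked in slot t.
  A deterministic scheduling algorithm is a function from the history of the
  adversary's actions (the list of blocking columns of slots 1,...,t-1) to the
  user scheduled in slot t.\<close>

type_synonym blocking = "nat \<Rightarrow> nat \<Rightarrow> bool"
type_synonym algorithm = "(nat \<Rightarrow> bool) list \<Rightarrow> nat"

definition history :: "blocking \<Rightarrow> nat \<Rightarrow> (nat \<Rightarrow> bool) list" where
  "history blk t = map (\<lambda>s i. blk i s) [1..<t]"

definition sched :: "algorithm \<Rightarrow> blocking \<Rightarrow> nat \<Rightarrow> nat" where
  "sched A blk t = A (history blk t)"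

definition feasible :: "nat \<Rightarrow> nat \<Rightarrow> real \<Rightarrow> blocking \<Rightarrow> bool" where
  "feasible N T \<alpha> blk \<longleftrightarrow>
     (\<forall>i t. blk i t \<longrightarrow> i < N \<and> 1 \<le> t \<and> t \<le> T) \<and>
     real (card {(i, t). i < N \<and> t \<in> {1..T} \<and> blk i t}) \<le> \<alpha> * real T \<and>
     (\<forall>t \<in> {1..T}. card {i. i < N \<and> blk i t} \<le> 1)"

text \<open>age A blk i t = a_i(t), for t \<ge> 1 (the value at t = 0 is irrelevant).\<close>
fun age :: "algorithm \<Rightarrow> blocking \<Rightarrow> nat \<Rightarrow> nat \<Rightarrow> nat" where
  "age A blk i 0 = 1"
| "age A blk i (Suc 0) = 1"
| "age A blk i (Suc (Suc t)) =
     (if sched A blk (Suc t) = i \<and> \<not> blk i (Suc t) then 1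
      else age A blk i (Suc t) + 1)"

definition avg_age :: "nat \<Rightarrow> nat \<Rightarrow> algorithm \<Rightarrow> blocking \<Rightarrow> real" where
  "avg_age N T A blk =
     (1 / real T) * (\<Sum>t = 1..T. (1 / real N) * (\<Sum>i < N. real (age A blk i t)))"

end

theory Submission
  imports Defs
begin

text \<open>Let \<open>K = \<alpha> T\<close>. The adversary spends its whole budget in the first \<open>K\<close> slots, each time
  blocking exactly the user the algorithm schedules (it can predict the choice because the
  algorithm is deterministic and sees only past blocking). Then nobody is ever served in these
  slots, so every age equals \<open>t\<close> in slot \<open>t \<le> K\<close>, and the average age is at least
  \<open>(1 + \<dots> + K) / T \<ge> K\<^sup>2 / (2 T) = T \<alpha>\<^sup>2 / 2\<close>.\<close>

lemma age_eq_slot_if_scheduled_blocked: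
  assumes "\<And>s. 1 \<le> s \<Longrightarrow> s < t \<Longrightarrow> blk (sched A blk s) s" and "1 \<le> t"
  shows "age A blk i t = t"
  using assms(2,1)
proof (induction t rule: nat_induct_at_least)
  case base
  then show ?case by simp
next
  case (Suc t)
  then obtain m where "t = Suc m" by (cases t) auto
  moreover have "blk (sched A blk t) t" using Suc by simp
  ultimately show ?case using Suc by auto
qed

text \<open>The adversary's column in slot \<open>n + 1\<close> depends on the algorithm's choice on the history of
  slots \<open>1..n\<close>, so the history is generated first and the blocking matrix read off from it.\<close>

fun blocking_history :: "algorithm \<Rightarrow> nat \<Rightarrow> nat \<Rightarrow> (nat \<Rightarrow> bool) list" where
  "blocking_history A K 0 = []"
| "blocking_history A K (Suc n) =
     blocking_history A K n @ [(\<lambda>i. Suc n \<le> K \<and> i = A (blocking_history A K n))]"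

definition block_scheduled :: "algorithm \<Rightarrow> nat \<Rightarrow> blocking" where
  "block_scheduled A K i t \<longleftrightarrow> 1 \<le> t \<and> t \<le> K \<and> i = A (blocking_history A K (t - 1))"

lemma history_block_scheduled: "history (block_scheduled A K) (Suc n) = blocking_history A K n"
proof (induction n)
  case 0
  then show ?case by (simp add: history_def)
next
  case (Suc n)
  have "history (block_scheduled A K) (Suc (Suc n)) =
      history (block_scheduled A K) (Suc n) @ [(\<lambda>i. block_scheduled A K i (Suc n))]"
    by (simp add: history_def)
  also have "\<dots> = blocking_history A K (Suc n)"
    unfolding Suc.IH by (simp add: block_scheduled_def fun_eq_iff)
  finally show ?case .
qed

lemma sched_block_scheduled:
  "1 \<le> t \<Longrightarrow> sched A (block_scheduled A K) t = A (blocking_history A K (t - 1))"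
  using history_block_scheduled[of A K "t - 1"] by (simp add: sched_def)

lemma block_scheduled_blocks_sched:
  "1 \<le> t \<Longrightarrow> t \<le> K \<Longrightarrow> block_scheduled A K (sched A (block_scheduled A K) t) t"
  by (simp add: sched_block_scheduled block_scheduled_def)

lemma age_block_scheduled:
  "1 \<le> t \<Longrightarrow> t \<le> Suc K \<Longrightarrow> age A (block_scheduled A K) i t = t"
  by (rule age_eq_slot_if_scheduled_blocked) (auto intro: block_scheduled_blocks_sched)

lemma feasible_block_scheduled:
  assumes "\<forall>h. A h < N" and "K \<le> T" and "real K \<le> \<alpha> * real T"
  shows "feasible N T \<alpha> (block_scheduled A K)"
  unfolding feasible_def
proof (intro conjI allI impI ballI)
  fix i t
  assume "block_scheduled A K i t"
  then show "i < N" "1 \<le> t" "t \<le> T"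
    using assms(1,2) by (auto simp: block_scheduled_def)
next
  let ?blocked = "{(i, t). i < N \<and> t \<in> {1..T} \<and> block_scheduled A K i t}"
  have "?blocked \<subseteq> (\<lambda>t. (A (blocking_history A K (t - 1)), t)) ` {1..K}"
    by (auto simp: block_scheduled_def)
  then have "card ?blocked \<le> card ((\<lambda>t. (A (blocking_history A K (t - 1)), t)) ` {1..K})"
    by (intro card_mono) auto
  also have "\<dots> \<le> K"
    using card_image_le[of "{1..K}"] by simp
  finally show "real (card ?blocked) \<le> \<alpha> * real T"
    using assms(3) by linarith
next
  fix t
  have "{i. i < N \<and> block_scheduled A K i t} \<subseteq> {A (blocking_history A K (t - 1))}"
    by (auto simp: block_scheduled_def)
  then show "card {i. i < N \<and> block_scheduled A K i t} \<le> 1"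
    using card_mono[of "{A (blocking_history A K (t - 1))}"] by fastforce
qed

lemma avg_age_block_scheduled_ge:
  assumes "N > 0" and "K \<le> T"
  shows "real K * (real K + 1) / (2 * real T) \<le> avg_age N T A (block_scheduled A K)"
proof -
  define mean_age where
    "mean_age t = (1 / real N) * (\<Sum>i < N. real (age A (block_scheduled A K) i t))" for t
  have "real K * (real K + 1) / 2 = (\<Sum>t = 1..K. real t)"
    using double_gauss_sum_from_Suc_0[of K, where ?'a = real] by simp
  also have "\<dots> = (\<Sum>t = 1..K. mean_age t)"
    using assms(1) by (intro sum.cong) (simp_all add: mean_age_def age_block_scheduled)
  also have "\<dots> \<le> (\<Sum>t = 1..T. mean_age t)"
    using assms(2) by (intro sum_mono2) (auto simp: mean_age_def intro!: divide_nonneg_nonneg sum_nonneg)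
  finally show ?thesis
    by (simp add: avg_age_def mean_age_def divide_right_mono flip: divide_divide_eq_left)
qed

theorem lemma1:
  fixes N T :: nat and \<alpha> :: real and A :: algorithm
  assumes "N \<ge> 2"
    and "0 < \<alpha>" and "\<alpha> < 1"
    and "\<alpha> * real T \<in> \<int>"
    and "\<forall>h. A h < N"
  shows "\<exists>blk. feasible N T \<alpha> blk \<and> avg_age N T A blk \<ge> real T * \<alpha>^2 / 2"
proof -
  obtain k where k: "\<alpha> * real T = of_int k"
    using assms(4) by (auto elim: Ints_cases)
  have "k \<ge> 0"
    using k assms(2) by (metis of_int_0_le_iff less_imp_le mult_nonneg_nonneg of_nat_0_le_iff)
  define K where "K = nat k"
  have K: "real K = \<alpha> * real T"
    using k \<open>k \<ge> 0\<close> by (simp add: K_def)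
  have "\<alpha> * real T \<le> real T" using assms(2,3) by (intro mult_left_le_one_le) auto
  then have "K \<le> T" using K by linarith
  have "real T * \<alpha>^2 / 2 \<le> real K * (real K + 1) / (2 * real T)"
    using K by (cases "T = 0") (simp_all add: field_simps power2_eq_square)
  also have "\<dots> \<le> avg_age N T A (block_scheduled A K)"
    using assms(1) \<open>K \<le> T\<close> by (intro avg_age_block_scheduled_ge) auto
  finally show ?thesis
    using feasible_block_scheduled[OF assms(5) \<open>K \<le> T\<close>] K by auto
qed

end
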